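(* In the two-door cascading memoryless semi-fractional setting, let $\pi^\star$ be an optimal semi-fractional sequence, and let $\theta=-c\log(q_1)/p_2$ and $\psi=\frac12\big(\sqrt{\theta^2+4\theta}-\theta\big)$ (natural logarithms). Then $$\mathbb{E}[\pi^\star]\in\frac{1}{\log(1/q_1)}\left(\log\frac{1}{1-\psi}+\frac{\theta}{\psi}+1\right)-\left[0,\frac{p_2}{\log(1/q_1)}\right],$$ where $a-[0,b]$ denotes the interval $[a-b,a]$.
   Context: Two cascading memoryless doors with durations: parameters $p_1,p_2\in(0,1)$, $q_1=1-p_1$, $q_2=1-p_2$, and $c>0$. Both doors start closed. A semi-fractional sequence is an infinite alternating sequence of knocks $1^{t_1}\,2\,1^{t_2}\,2\cdots$ with real $t_j\ge0$. A 1-knock $1^t$ takes $t$ time units and, if door 1 is closed, opens it with probability $1-q_1^t$, independently of everything else. A 2-knock takes $c$ time units and opens door 2 with probability $p_2$ (independently) if door 1 is open at that time, and with probability $0$ otherwise. There is no feedback. The running time is the time at which both doors are open, and $\mathbb{E}[\pi]$ is its expectation for sequence $\pi$; $\pi^\star$ is optimal if $\mathbb{E}[\pi^\star]\le\mathbb{E}[\pi]$ for all semi-fractional $\pi$. *)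

theory Defs
  imports "HOL-Analysis.Analysis"
begin

text \<open>
Two cascading memoryless doors with durations.  A semi-fractional sequence
1^{t_1} 2 1^{t_2} 2 ... is represented by t :: nat => real, where t j is the
exponent t_{j+1} (0-indexed), with t j >= 0.

One_time t k = t_1 + ... + t_k is the total 1-knock time spent before the k-th
2-knock.  Door 1 is closed at the k-th 2-knock with probability q1 powr (One_time t k),
so door 1 is first found open at 2-knock m with probability
q1 powr (One_time t (m-1)) - q1 powr (One_time t m); afterwards every 2-knock
independently opens door 2 with probability p2.
\<close>

definition One_time :: "(nat \<Rightarrow> real) \<Rightarrow> nat \<Rightarrow> real" where
  "One_time t k = (\<Sum>i<k. t i)"

text \<open>Probability that door 2 (hence not both doors) is still closed after the
first k 2-knocks have been performed.\<close>
definition still_closed :: "real \<Rightarrow> real \<Rightarrow> (nat \<Rightarrow> real) \<Rightarrow> nat \<Rightarrow> real" where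
  "still_closed q1 q2 t k =
     q1 powr One_time t k
     + (\<Sum>m\<in>{1..k}. (q1 powr One_time t (m - 1) - q1 powr One_time t m) * q2 ^ (k - m + 1))"

text \<open>Expected running time: the running time is the end of the first successful
2-knock.  The (k+1)-st block 1^{t_{k+1}} 2 (duration t_{k+1} + c) is executed
exactly when the doors are not both open after k 2-knocks, so by the tail-sum
formula the expectation is the following sum (in ennreal, possibly infinite).\<close>
definition exp_time :: "real \<Rightarrow> real \<Rightarrow> real \<Rightarrow> (nat \<Rightarrow> real) \<Rightarrow> ennreal" where
  "exp_time p1 p2 c t =
     (\<Sum>k. ennreal ((t k + c) * still_closed (1 - p1) (1 - p2) t k))"

definition semi_fractional :: "(nat \<Rightarrow> real) \<Rightarrow> bool" where
  "semi_fractional t \<longleftrightarrow> (\<forall>j. 0 \<le> t j)"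

definition optimal_seq :: "real \<Rightarrow> real \<Rightarrow> real \<Rightarrow> (nat \<Rightarrow> real) \<Rightarrow> bool" where
  "optimal_seq p1 p2 c t \<longleftrightarrow> semi_fractional t \<and>
     (\<forall>t'. semi_fractional t' \<longrightarrow> exp_time p1 p2 c t \<le> exp_time p1 p2 c t')"

end

theory Submission
  imports Defs
begin

(* Let lam = ln (1/q1), A k = q1 powr One_time t k (door 1 still closed at the k-th 2-knock) and
   S k = still_closed, so that E = sum_k (t k + c) S k and S (k+1) = p2 A (k+1) + (1 - p2) S k.
   The choice of psi makes lam c = p2 psi^2/(1 - psi).

   Lower bound: with K = opt_const psi - p2, the potential S (K - ln (S/A)) loses at most
   lam (t k + c) S k during the block 1^(t k) 2; it starts at K and is at most A e^(K-1), which
   tends to 0 when E is finite.  Hence lam E >= K for every semi-fractional sequence.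

   Upper bound: for the sequence with first exponent ln (1/(1-psi))/lam and all later ones
   p2 psi/lam, the sums S k are of mixed geometric type and add up to
   lam E <= opt_const psi, using z e^(-z) <= 1 - e^(-z).  An optimal sequence is no worse, so its
   expectation is finite and both bounds apply to it. *)

definition opt_const :: "real \<Rightarrow> real" where
  "opt_const \<psi> = 1 + \<psi> / (1 - \<psi>) - ln (1 - \<psi>)"

lemma opt_const_pos:
  fixes \<psi> :: real
  assumes "0 < \<psi>" "\<psi> < 1"
  shows "0 < opt_const \<psi>"
proof -
  have "ln (1 - \<psi>) < 0" "0 < \<psi> / (1 - \<psi>)"
    using assms by auto
  then show ?thesis
    unfolding opt_const_def by linarith
qed

section \<open>Closing probabilities\<close>

lemma One_time_0 [simp]: "One_time t 0 = 0"
  by (simp add: One_time_def)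

lemma One_time_Suc [simp]: "One_time t (Suc k) = One_time t k + t k"
  by (simp add: One_time_def)

lemma still_closed_0: "q1 \<noteq> 0 \<Longrightarrow> still_closed q1 q2 t 0 = 1"
  by (simp add: still_closed_def)

lemma still_closed_Suc:
  "still_closed q1 q2 t (Suc k)
     = (1 - q2) * q1 powr One_time t (Suc k) + q2 * still_closed q1 q2 t k"
proof -
  define d where "d m = q1 powr One_time t (m - 1) - q1 powr One_time t m" for m
  have "(\<Sum>m\<in>{1..k}. d m * q2 ^ (Suc k - m + 1)) = q2 * (\<Sum>m\<in>{1..k}. d m * q2 ^ (k - m + 1))"
    unfolding sum_distrib_left by (intro sum.cong) (auto simp: Suc_diff_le)
  then have "(\<Sum>m\<in>{1..Suc k}. d m * q2 ^ (Suc k - m + 1))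
      = q2 * (\<Sum>m\<in>{1..k}. d m * q2 ^ (k - m + 1)) + d (Suc k) * q2"
    by simp
  then show ?thesis
    by (simp add: still_closed_def d_def algebra_simps)
qed

lemma powr_One_time_le_still_closed:
  fixes q1 q2 :: real
  assumes "0 < q1" "q1 \<le> 1" "0 \<le> q2" "q2 \<le> 1" "\<forall>j. 0 \<le> t j"
  shows "q1 powr One_time t k \<le> still_closed q1 q2 t k"
proof (induction k)
  case 0
  then show ?case using assms by (simp add: still_closed_0)
next
  case (Suc k)
  have "q1 powr One_time t (Suc k) \<le> q1 powr One_time t k"
    using assms by (intro powr_mono') auto
  then have "q1 powr One_time t (Suc k) \<le> still_closed q1 q2 t k"
    using Suc.IH by linarith
  then have "q2 * q1 powr One_time t (Suc k) \<le> q2 * still_closed q1 q2 t k"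
    using assms by (intro mult_left_mono) auto
  then show ?case by (simp add: still_closed_Suc algebra_simps)
qed

lemma exp_time_summand_nonneg:
  fixes q1 q2 c :: real
  assumes "0 < q1" "q1 \<le> 1" "0 \<le> q2" "q2 \<le> 1" "0 \<le> c" "\<forall>j. 0 \<le> t j"
  shows "0 \<le> (t k + c) * still_closed q1 q2 t k"
proof -
  have "0 \<le> q1 powr One_time t k" by simp
  also have "\<dots> \<le> still_closed q1 q2 t k"
    using assms by (intro powr_One_time_le_still_closed)
  finally show ?thesis using assms by simp
qed

lemma exp_time_eq_ennreal_suminf:
  fixes p1 p2 c :: real
  assumes "0 < p1" "p1 < 1" "0 < p2" "p2 < 1" "0 \<le> c" "\<forall>j. 0 \<le> t j"
    and "exp_time p1 p2 c t \<noteq> \<infinity>"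
  shows "summable (\<lambda>k. (t k + c) * still_closed (1 - p1) (1 - p2) t k)"
    and "exp_time p1 p2 c t = ennreal (\<Sum>k. (t k + c) * still_closed (1 - p1) (1 - p2) t k)"
proof -
  have nonneg: "0 \<le> (t k + c) * still_closed (1 - p1) (1 - p2) t k" for k
    using assms by (intro exp_time_summand_nonneg) auto
  show summable: "summable (\<lambda>k. (t k + c) * still_closed (1 - p1) (1 - p2) t k)"
    using assms(7) by (intro summable_suminf_not_top nonneg) (simp add: exp_time_def)
  show "exp_time p1 p2 c t = ennreal (\<Sum>k. (t k + c) * still_closed (1 - p1) (1 - p2) t k)"
    unfolding exp_time_def by (intro suminf_ennreal2 nonneg summable)
qed

section \<open>Lower bound via a potential\<close>

lemma ln_deficit_le:
  fixes \<psi> u :: real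
  assumes "0 < \<psi>" "\<psi> < 1" "1 \<le> u"
  shows "(u - 1) * (\<psi> - ln (u * (1 - \<psi>))) \<le> \<psi>\<^sup>2 / (1 - \<psi>)"
proof -
  define y where "y = u * (1 - \<psi>)"
  have y: "0 < y" using assms by (simp add: y_def)
  have "1 - 1 / y \<le> ln y"
    using ln_le_minus_one[of "1 / y"] y by (simp add: ln_div)
  then have "(u - 1) * (\<psi> - ln y) \<le> (u - 1) * (\<psi> - 1 + 1 / y)"
    using assms by (intro mult_left_mono) auto
  also have "\<dots> \<le> \<psi>\<^sup>2 / (1 - \<psi>)"
  proof (rule mult_right_le_imp_le[OF _ y])
    have "(u - 1) * (\<psi> - 1 + 1 / y) * y = (u - 1) * ((\<psi> - 1) * y + 1)"
      using y by (simp add: field_simps)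
    also have "\<dots> = u * \<psi>\<^sup>2 - (u * (1 - \<psi>) - 1)\<^sup>2"
      by (simp add: y_def power2_eq_square algebra_simps)
    also have "\<dots> \<le> u * \<psi>\<^sup>2"
      by simp
    also have "\<dots> = \<psi>\<^sup>2 / (1 - \<psi>) * y"
      using assms by (simp add: y_def)
    finally show "(u - 1) * (\<psi> - 1 + 1 / y) * y \<le> \<psi>\<^sup>2 / (1 - \<psi>) * y" .
  qed
  finally show ?thesis by (simp add: y_def)
qed

lemma mult_ln_le_tangent:
  fixes u v :: real
  assumes "0 < u" "0 < v"
  shows "v * ln v \<le> v * ln u + v * (v - u) / u"
proof -
  have "ln (v / u) \<le> v / u - 1"
    using assms by (intro ln_le_minus_one) simp
  then have "ln v \<le> ln u + (v - u) / u"
    using assms by (simp add: ln_div diff_divide_distrib)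
  then show ?thesis
    using assms by (metis distrib_left mult_left_mono less_imp_le times_divide_eq_right)
qed

definition potential :: "real \<Rightarrow> real \<Rightarrow> real \<Rightarrow> real" where
  "potential K a s = s * (K - ln (s / a))"

text \<open>The inequality of \<open>potential_step\<close> after substituting u = s / a' and
  v = (p2 a' + (1 - p2) s) / a'.\<close>

lemma potential_step_ratio:
  fixes p2 \<psi> u :: real
  assumes "0 < p2" "p2 \<le> 1" "0 < \<psi>" "\<psi> < 1" "1 \<le> u"
  defines "v \<equiv> p2 + (1 - p2) * u"
  shows "p2 * (u - 1) * (opt_const \<psi> - p2) \<le> p2 * (\<psi>\<^sup>2 / (1 - \<psi>)) * u + u * ln u - v * ln v"
proof -
  define \<theta> where "\<theta> = \<psi>\<^sup>2 / (1 - \<psi>)"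
  have "0 < u" using assms by simp
  have "(1 - p2) * 1 \<le> (1 - p2) * u"
    using assms by (intro mult_left_mono) auto
  then have "0 < v" "(1 - p2) * u \<le> v"
    using assms by (auto simp: v_def)
  then have "(u - 1) * (1 - p2) \<le> (u - 1) * (v / u)"
    using \<open>0 < u\<close> assms by (intro mult_left_mono) (auto simp: field_simps)
  moreover have "(u - 1) * (\<psi> - ln (u * (1 - \<psi>))) \<le> \<theta>"
    using ln_deficit_le[of \<psi> u] assms by (simp add: \<theta>_def)
  moreover have "(u - 1) * (opt_const \<psi> - p2)
      = (u - 1) * (1 - p2) + (u - 1) * (\<psi> - ln (u * (1 - \<psi>))) + (u - 1) * ln u + (u - 1) * \<theta>"
  proof -
    have "\<psi> / (1 - \<psi>) = \<psi> + \<theta>"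
      using assms by (simp add: \<theta>_def field_simps power2_eq_square)
    moreover have "ln (u * (1 - \<psi>)) = ln u + ln (1 - \<psi>)"
      using assms \<open>0 < u\<close> by (simp add: ln_mult)
    ultimately show ?thesis by (simp add: opt_const_def algebra_simps)
  qed
  ultimately have "(u - 1) * (opt_const \<psi> - p2) \<le> \<theta> * u + (u - 1) * ln u + (u - 1) * (v / u)"
    by (simp add: algebra_simps)
  then have "p2 * ((u - 1) * (opt_const \<psi> - p2))
      \<le> p2 * (\<theta> * u + (u - 1) * ln u + (u - 1) * (v / u))"
    using assms by (intro mult_left_mono) auto
  moreover have "p2 * (u - 1) * ln u + p2 * (u - 1) * (v / u) \<le> u * ln u - v * ln v"
  proof -
    have "p2 * (u - 1) = u - v" by (simp add: v_def algebra_simps)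
    moreover have "(u - v) * ln u = u * ln u - v * ln u"
      by (simp add: left_diff_distrib)
    moreover have "(u - v) * (v / u) = - (v * (v - u) / u)"
      using \<open>0 < u\<close> by (simp add: field_simps)
    moreover have "v * ln v \<le> v * ln u + v * (v - u) / u"
      using mult_ln_le_tangent \<open>0 < u\<close> \<open>0 < v\<close> .
    ultimately show ?thesis by simp
  qed
  ultimately show ?thesis
    unfolding \<theta>_def by (simp only: distrib_left mult.assoc)
qed

lemma potential_step:
  fixes p2 \<psi> a a' s :: real
  assumes "0 < p2" "p2 \<le> 1" "0 < \<psi>" "\<psi> < 1" "0 < a'" "a' \<le> a" "a \<le> s"
  defines "K \<equiv> opt_const \<psi> - p2"
  shows "potential K a s
           \<le> (ln (a / a') + p2 * (\<psi>\<^sup>2 / (1 - \<psi>))) * s + potential K a' (p2 * a' + (1 - p2) * s)"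
proof -
  define u where "u = s / a'"
  define v where "v = p2 + (1 - p2) * u"
  have "0 < a" "1 \<le> u" using assms by (auto simp: u_def)
  have s: "s = a' * u" using assms by (simp add: u_def)
  have "ln (s / a) = ln u - ln (a / a')"
    using assms \<open>0 < a\<close> \<open>1 \<le> u\<close> by (simp add: s ln_div ln_mult)
  then have "potential K a s = a' * u * (K - ln u + ln (a / a'))"
    by (simp add: potential_def s)
  moreover have "p2 * a' + (1 - p2) * s = a' * v"
    by (simp add: s v_def algebra_simps)
  then have "potential K a' (p2 * a' + (1 - p2) * s) = a' * v * (K - ln v)"
    using assms by (simp add: potential_def)
  ultimately have "(ln (a / a') + p2 * (\<psi>\<^sup>2 / (1 - \<psi>))) * s
      + potential K a' (p2 * a' + (1 - p2) * s) - potential K a s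
      = a' * (p2 * (\<psi>\<^sup>2 / (1 - \<psi>)) * u + u * ln u - v * ln v + (v - u) * K)"
    by (simp add: s algebra_simps)
  also have "\<dots> \<ge> 0"
  proof -
    have "v - u = - (p2 * (u - 1))" by (simp add: v_def algebra_simps)
    then show ?thesis
      using potential_step_ratio[of p2 \<psi> u] assms \<open>1 \<le> u\<close> by (simp add: K_def v_def)
  qed
  finally show ?thesis by simp
qed

lemma potential_le_exp:
  fixes K a s :: real
  assumes "0 < a" "0 < s"
  shows "potential K a s \<le> a * exp (K - 1)"
proof -
  define w where "w = s / a"
  have "0 < w" using assms by (simp add: w_def)
  have "ln (exp (K - 1) / w) \<le> exp (K - 1) / w - 1"
    using \<open>0 < w\<close> by (intro ln_le_minus_one) simp
  then have "w * (K - ln w) \<le> exp (K - 1)"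
    using \<open>0 < w\<close> by (simp add: ln_div field_simps)
  then show ?thesis
    using assms by (simp add: potential_def w_def field_simps)
qed

lemma still_closed_partial_sum_ge:
  fixes p1 p2 c \<psi> :: real and t :: "nat \<Rightarrow> real"
  defines "lam \<equiv> ln (1 / (1 - p1))"
    and "K \<equiv> opt_const \<psi> - p2"
  assumes "0 < p1" "p1 < 1" "0 < p2" "p2 < 1" "0 < \<psi>" "\<psi> < 1" "\<forall>j. 0 \<le> t j"
    and lam_c: "lam * c = p2 * (\<psi>\<^sup>2 / (1 - \<psi>))"
  shows "K - (1 - p1) powr One_time t n * exp (K - 1)
           \<le> lam * (\<Sum>k<n. (t k + c) * still_closed (1 - p1) (1 - p2) t k)"
proof -
  define A where "A k = (1 - p1) powr One_time t k" for k
  define S where "S k = still_closed (1 - p1) (1 - p2) t k" for k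
  have A_pos: "0 < A k" for k
    using assms by (simp add: A_def)
  have A_le_S: "A k \<le> S k" for k
    unfolding A_def S_def using assms by (intro powr_One_time_le_still_closed) auto
  have "K \<le> lam * (\<Sum>k<n. (t k + c) * S k) + potential K (A n) (S n)"
  proof (induction n)
    case 0
    then show ?case
      using assms by (simp add: potential_def A_def S_def still_closed_0)
  next
    case (Suc n)
    have "A (Suc n) = A n * (1 - p1) powr t n"
      by (simp add: A_def powr_add)
    then have "ln (A n / A (Suc n)) = - ln ((1 - p1) powr t n)"
      using A_pos[of n] assms by (simp add: ln_div ln_mult)
    then have "ln (A n / A (Suc n)) + p2 * (\<psi>\<^sup>2 / (1 - \<psi>)) = lam * (t n + c)"
      using assms by (simp add: lam_c[symmetric] lam_def ln_div distrib_left)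
    moreover have "p2 * A (Suc n) + (1 - p2) * S n = S (Suc n)"
      by (simp add: S_def A_def still_closed_Suc)
    moreover have "A (Suc n) \<le> A n"
      using assms unfolding A_def by (intro powr_mono') auto
    then have "potential K (A n) (S n)
        \<le> (ln (A n / A (Suc n)) + p2 * (\<psi>\<^sup>2 / (1 - \<psi>))) * S n
           + potential K (A (Suc n)) (p2 * A (Suc n) + (1 - p2) * S n)"
      unfolding K_def using assms A_pos A_le_S by (intro potential_step) auto
    ultimately have "potential K (A n) (S n)
        \<le> lam * (t n + c) * S n + potential K (A (Suc n)) (S (Suc n))"
      by simp
    with Suc.IH show ?case by (simp add: algebra_simps)
  qed
  moreover have "potential K (A n) (S n) \<le> A n * exp (K - 1)"
    using A_pos A_le_S by (intro potential_le_exp) (auto intro: less_le_trans)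
  ultimately show ?thesis by (simp add: A_def S_def algebra_simps)
qed

lemma still_closed_suminf_ge:
  fixes p1 p2 c \<psi> :: real and t :: "nat \<Rightarrow> real"
  defines "lam \<equiv> ln (1 / (1 - p1))"
    and "K \<equiv> opt_const \<psi> - p2"
  assumes bounds: "0 < p1" "p1 < 1" "0 < p2" "p2 < 1" "0 < \<psi>" "\<psi> < 1" "\<forall>j. 0 \<le> t j"
    and "0 < c" and lam_c: "lam * c = p2 * (\<psi>\<^sup>2 / (1 - \<psi>))"
    and summable: "summable (\<lambda>k. (t k + c) * still_closed (1 - p1) (1 - p2) t k)"
  shows "K \<le> lam * (\<Sum>k. (t k + c) * still_closed (1 - p1) (1 - p2) t k)"
proof -
  define f where "f = (\<lambda>k. (t k + c) * still_closed (1 - p1) (1 - p2) t k)"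
  define A where "A = (\<lambda>k. (1 - p1) powr One_time t k)"
  have "A k \<le> f k / c" for k
  proof -
    have "A k \<le> still_closed (1 - p1) (1 - p2) t k"
      unfolding A_def using bounds by (intro powr_One_time_le_still_closed) auto
    moreover have "0 \<le> A k" by (simp add: A_def)
    ultimately have "c * A k \<le> f k"
      unfolding f_def using bounds \<open>0 < c\<close> by (intro mult_mono) auto
    then show ?thesis using \<open>0 < c\<close> by (simp add: field_simps)
  qed
  then have upper: "\<forall>\<^sub>F k in sequentially. A k \<le> f k / c" by simp
  have lower: "\<forall>\<^sub>F k in sequentially. 0 \<le> A k" by (simp add: A_def)
  have "(\<lambda>k. f k / c) \<longlonglongrightarrow> 0 / c"
    using summable \<open>0 < c\<close> unfolding f_def[symmetric]
    by (intro tendsto_divide summable_LIMSEQ_zero) auto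
  then have "A \<longlonglongrightarrow> 0"
    using tendsto_sandwich[OF lower upper tendsto_const] by simp
  then have "(\<lambda>n. lam * (\<Sum>k<n. f k) + A n * exp (K - 1)) \<longlonglongrightarrow> lam * suminf f + 0 * exp (K - 1)"
    using summable unfolding f_def[symmetric]
    by (intro tendsto_add tendsto_mult tendsto_const summable_LIMSEQ)
  moreover have "K - A n * exp (K - 1) \<le> lam * (\<Sum>k<n. f k)" for n
    unfolding lam_def K_def A_def f_def
    using still_closed_partial_sum_ge[OF bounds] lam_c by (simp add: lam_def)
  ultimately have "K \<le> lam * suminf f + 0 * exp (K - 1)"
    by (intro LIMSEQ_le_const) (auto simp: diff_le_eq)
  then show ?thesis by (simp add: f_def)
qed

lemma exp_time_ge:
  fixes p1 p2 c \<psi> :: real and t :: "nat \<Rightarrow> real"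
  defines "lam \<equiv> ln (1 / (1 - p1))"
  assumes bounds: "0 < p1" "p1 < 1" "0 < p2" "p2 < 1" "0 < \<psi>" "\<psi> < 1" "semi_fractional t"
    and "0 < c" and "lam * c = p2 * (\<psi>\<^sup>2 / (1 - \<psi>))"
  shows "ennreal ((opt_const \<psi> - p2) / lam) \<le> exp_time p1 p2 c t"
proof (cases "exp_time p1 p2 c t = \<infinity>")
  case False
  have t: "\<forall>j. 0 \<le> t j" using bounds by (simp add: semi_fractional_def)
  note finite = exp_time_eq_ennreal_suminf[OF bounds(1-4) less_imp_le[OF \<open>0 < c\<close>] t False]
  have "opt_const \<psi> - p2 \<le> lam * (\<Sum>k. (t k + c) * still_closed (1 - p1) (1 - p2) t k)"
    using still_closed_suminf_ge[OF bounds(1-6) t] finite(1) assms by (simp add: lam_def)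
  moreover have "0 < lam" using bounds by (simp add: lam_def)
  ultimately show ?thesis
    using finite(2) \<open>0 < c\<close> by (simp add: ennreal_leI divide_le_eq mult.commute)
qed simp

section \<open>Upper bound via an explicit sequence\<close>

lemma powr_div_ln_inverse:
  fixes q y :: real
  assumes "0 < q" "q \<noteq> 1"
  shows "q powr (y / ln (1 / q)) = exp (- y)"
  using assms by (simp add: powr_def ln_div)

lemma mult_exp_neg_le_one_minus_exp_neg:
  fixes z :: real
  shows "z * exp (- z) \<le> 1 - exp (- z)"
proof -
  have "(1 + z) * exp (- z) \<le> exp z * exp (- z)"
    by (intro mult_right_mono exp_ge_add_one_self) simp
  then show ?thesis by (simp add: exp_minus field_simps)
qed

lemma sum_mixed_geometric_le:
  fixes a s :: "nat \<Rightarrow> real" and p x :: real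
  assumes "0 < p" "0 \<le> x" "x < 1"
    and a_Suc: "\<And>k. a (Suc k) = x * a k"
    and s_Suc: "\<And>k. s (Suc k) = p * a (Suc k) + (1 - p) * s k"
    and "\<And>k. 0 \<le> a k" "\<And>k. 0 \<le> s k"
  shows "(\<Sum>k<n. s k) \<le> a 0 * x / (1 - x) + s 0 / p"
proof -
  define G where "G k = a k * x / (1 - x) + s k / p" for k
  have "(\<Sum>k<n. s k) + G n = G 0"
  proof (induction n)
    case (Suc n)
    have "s n + G (Suc n) = G n"
      using assms by (simp add: G_def a_Suc s_Suc field_simps)
    with Suc.IH show ?case by simp
  qed simp
  moreover have "0 \<le> G n"
    using assms by (simp add: G_def)
  ultimately have "(\<Sum>k<n. s k) \<le> G 0" by linarith
  then show ?thesis by (simp add: G_def)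
qed

definition witness_seq :: "real \<Rightarrow> real \<Rightarrow> real \<Rightarrow> nat \<Rightarrow> real" where
  "witness_seq p1 p2 \<psi> k = (if k = 0 then ln (1 / (1 - \<psi>)) else p2 * \<psi>) / ln (1 / (1 - p1))"

lemma semi_fractional_witness_seq:
  fixes p1 p2 \<psi> :: real
  assumes "0 < p1" "p1 < 1" "0 < p2" "0 < \<psi>" "\<psi> < 1"
  shows "semi_fractional (witness_seq p1 p2 \<psi>)"
proof -
  have "0 < ln (1 / (1 - p1))" "0 \<le> ln (1 / (1 - \<psi>))"
    using assms by (simp_all add: ln_div)
  then show ?thesis
    using assms by (simp add: semi_fractional_def witness_seq_def)
qed

lemma witness_seq_partial_sum_le:
  fixes p1 p2 c \<psi> :: real
  defines "lam \<equiv> ln (1 / (1 - p1))"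
    and "tu \<equiv> witness_seq p1 p2 \<psi>"
    and "x \<equiv> exp (- (p2 * \<psi>))"
  assumes bounds: "0 < p1" "p1 < 1" "0 < p2" "p2 < 1" "0 < \<psi>" "\<psi> < 1" and "0 \<le> c"
  shows "(\<Sum>k<n. (tu k + c) * still_closed (1 - p1) (1 - p2) tu k)
           \<le> ln (1 / (1 - \<psi>)) / lam + c
              + (p2 * \<psi> / lam + c) * ((1 - \<psi>) * x / (1 - x) + (1 - p2 * \<psi>) / p2)"
proof -
  define A where "A k = (1 - p1) powr One_time tu k" for k
  define S where "S k = still_closed (1 - p1) (1 - p2) tu k" for k
  have "0 < lam" using bounds by (simp add: lam_def)
  have tu: "\<forall>j. 0 \<le> tu j"
    using semi_fractional_witness_seq[of p1 p2 \<psi>] bounds by (simp add: tu_def semi_fractional_def)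
  have powr_tu: "(1 - p1) powr (y / lam) = exp (- y)" for y
    unfolding lam_def using bounds by (intro powr_div_ln_inverse) auto
  have S_Suc: "S (Suc k) = p2 * A (Suc k) + (1 - p2) * S k" for k
    by (simp add: S_def A_def still_closed_Suc)
  have "A (Suc 0) = (1 - p1) powr (ln (1 / (1 - \<psi>)) / lam)"
    by (simp add: A_def tu_def witness_seq_def lam_def)
  also have "\<dots> = 1 - \<psi>"
    unfolding powr_tu using bounds by (simp add: ln_div)
  finally have A_1: "A (Suc 0) = 1 - \<psi>" .
  have S_0: "S 0 = 1"
    using bounds by (simp add: S_def still_closed_0)
  have A_nonneg: "0 \<le> A k" for k
    by (simp add: A_def)
  have "A k \<le> S k" for k
    unfolding A_def S_def using bounds tu by (intro powr_One_time_le_still_closed) auto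
  then have S_nonneg: "0 \<le> S k" for k
    using A_nonneg order_trans by blast
  have "x < 1" using bounds by (simp add: x_def)
  have "(\<Sum>k<n. S (Suc k)) \<le> A (Suc 0) * x / (1 - x) + S (Suc 0) / p2"
  proof (rule sum_mixed_geometric_le[where a = "\<lambda>k. A (Suc k)" and s = "\<lambda>k. S (Suc k)"])
    show "A (Suc (Suc k)) = x * A (Suc k)" for k
      using powr_tu[of "p2 * \<psi>"]
      by (simp add: A_def tu_def witness_seq_def lam_def powr_add x_def)
  qed (use bounds \<open>x < 1\<close> S_Suc A_nonneg S_nonneg in \<open>auto simp: x_def\<close>)
  moreover have "S (Suc 0) = 1 - p2 * \<psi>"
    using S_Suc[of 0] A_1 S_0 by (simp add: algebra_simps)
  ultimately have "(p2 * \<psi> / lam + c) * (\<Sum>k<n. S (Suc k))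
      \<le> (p2 * \<psi> / lam + c) * ((1 - \<psi>) * x / (1 - x) + (1 - p2 * \<psi>) / p2)"
    using A_1 bounds \<open>0 < lam\<close> \<open>0 \<le> c\<close> by (intro mult_left_mono) auto
  moreover have "(\<Sum>k<Suc n. (tu k + c) * S k)
      = ln (1 / (1 - \<psi>)) / lam + c + (p2 * \<psi> / lam + c) * (\<Sum>k<n. S (Suc k))"
    by (subst sum.lessThan_Suc_shift)
      (simp add: sum_distrib_left tu_def witness_seq_def lam_def S_0)
  moreover have "0 \<le> (tu n + c) * S n"
    using tu S_nonneg \<open>0 \<le> c\<close> by simp
  ultimately show ?thesis
    by (simp add: S_def)
qed

lemma witness_seq_bound_le:
  fixes p2 \<psi> lam c :: real
  defines "x \<equiv> exp (- (p2 * \<psi>))"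
  assumes pos: "0 < p2" "0 < \<psi>" "\<psi> < 1" "0 < lam"
    and lam_c: "lam * c = p2 * (\<psi>\<^sup>2 / (1 - \<psi>))"
  shows "lam * (ln (1 / (1 - \<psi>)) / lam + c
           + (p2 * \<psi> / lam + c) * ((1 - \<psi>) * x / (1 - x) + (1 - p2 * \<psi>) / p2))
         \<le> opt_const \<psi>"
proof -
  define M where "M = \<psi> / (1 - \<psi>)"
  define L where "L = ln (1 / (1 - \<psi>))"
  define W where "W = (1 - \<psi>) * x / (1 - x) + (1 - p2 * \<psi>) / p2"
  have "x < 1" using pos by (simp add: x_def)
  have "p2 * \<psi> * x \<le> 1 - x"
    unfolding x_def by (rule mult_exp_neg_le_one_minus_exp_neg)
  then have geom: "p2 * \<psi> * x / (1 - x) \<le> 1"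
    using \<open>x < 1\<close> by simp
  have M: "M * (1 - \<psi>) = \<psi>"
    using pos by (simp add: M_def)
  have "\<psi>\<^sup>2 / (1 - \<psi>) = M - \<psi>"
    using pos by (simp add: M_def field_simps power2_eq_square)
  then have lam_c': "lam * c = p2 * M - p2 * \<psi>"
    by (simp add: lam_c right_diff_distrib)
  have "lam \<noteq> 0" "p2 \<noteq> 0" "x \<noteq> 1" using pos \<open>x < 1\<close> by auto
  then have "lam * (L / lam + c + (p2 * \<psi> / lam + c) * W) = L + lam * c + (p2 * \<psi> + lam * c) * W"
    by (simp add: field_simps)
  moreover have "(p2 * \<psi> + lam * c) * W = p2 * M * W"
    unfolding lam_c' by (simp add: algebra_simps)
  moreover have "p2 * M * W = p2 * (M * (1 - \<psi>)) * x / (1 - x) + M * (1 - p2 * \<psi>)"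
    using \<open>p2 \<noteq> 0\<close> \<open>x \<noteq> 1\<close> by (simp add: W_def field_simps)
  moreover have "M * (1 - p2 * \<psi>) = M - p2 * \<psi> * M"
    by (simp add: algebra_simps)
  moreover have "p2 * \<psi> * M = p2 * M - p2 * (M * (1 - \<psi>))"
    by (simp add: algebra_simps)
  moreover have "L = - ln (1 - \<psi>)"
    using pos by (simp add: L_def ln_div)
  ultimately have "lam * (L / lam + c + (p2 * \<psi> / lam + c) * W) \<le> 1 + M - ln (1 - \<psi>)"
    using geom lam_c' unfolding M by linarith
  then show ?thesis by (simp add: L_def W_def M_def opt_const_def)
qed

lemma exp_time_witness_seq_le:
  fixes p1 p2 c \<psi> :: real
  defines "lam \<equiv> ln (1 / (1 - p1))"
  assumes bounds: "0 < p1" "p1 < 1" "0 < p2" "p2 < 1" "0 < \<psi>" "\<psi> < 1"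
    and "0 < c" and lam_c: "lam * c = p2 * (\<psi>\<^sup>2 / (1 - \<psi>))"
  shows "exp_time p1 p2 c (witness_seq p1 p2 \<psi>) \<le> ennreal (opt_const \<psi> / lam)"
proof -
  define tu where "tu = witness_seq p1 p2 \<psi>"
  define f where "f = (\<lambda>k. (tu k + c) * still_closed (1 - p1) (1 - p2) tu k)"
  define x where "x = exp (- (p2 * \<psi>))"
  define B where "B = ln (1 / (1 - \<psi>)) / lam + c
    + (p2 * \<psi> / lam + c) * ((1 - \<psi>) * x / (1 - x) + (1 - p2 * \<psi>) / p2)"
  have "0 < lam" using bounds by (simp add: lam_def)
  have f_nonneg: "0 \<le> f k" for k
    unfolding f_def using bounds semi_fractional_witness_seq[of p1 p2 \<psi>] \<open>0 < c\<close>
    by (intro exp_time_summand_nonneg) (auto simp: semi_fractional_def tu_def)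
  have partial: "(\<Sum>k<n. f k) \<le> B" for n
    unfolding f_def B_def x_def tu_def lam_def
    using witness_seq_partial_sum_le[OF bounds, of c n] \<open>0 < c\<close> by simp
  have "lam * B \<le> opt_const \<psi>"
    unfolding B_def x_def using bounds \<open>0 < lam\<close> lam_c by (intro witness_seq_bound_le) auto
  then have "B \<le> opt_const \<psi> / lam"
    using \<open>0 < lam\<close> by (simp add: field_simps)
  moreover have "summable f"
    using f_nonneg partial by (intro summableI_nonneg_bounded)
  moreover have "suminf f \<le> B"
    using \<open>summable f\<close> partial by (intro suminf_le_const)
  ultimately have "ennreal (suminf f) \<le> ennreal (opt_const \<psi> / lam)"
    by (intro ennreal_leI) linarith
  moreover have "exp_time p1 p2 c tu = ennreal (suminf f)"
    unfolding exp_time_def f_def using f_nonneg \<open>summable f\<close>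
    by (intro suminf_ennreal2) (simp_all add: f_def)
  ultimately show ?thesis
    by (simp add: tu_def)
qed

lemma quadratic_root_in_unit_interval:
  fixes \<theta> :: real
  assumes "0 < \<theta>"
  defines "\<psi> \<equiv> (sqrt (\<theta>\<^sup>2 + 4 * \<theta>) - \<theta>) / 2"
  shows "0 < \<psi>" "\<psi> < 1" "\<psi>\<^sup>2 / (1 - \<psi>) = \<theta>" "\<theta> / \<psi> = \<psi> / (1 - \<psi>)"
proof -
  have "\<theta> < sqrt (\<theta>\<^sup>2 + 4 * \<theta>)"
    using assms by (intro real_less_rsqrt) (simp add: power2_eq_square)
  then show "0 < \<psi>" by (simp add: \<psi>_def)
  have "sqrt (\<theta>\<^sup>2 + 4 * \<theta>) < \<theta> + 2"
    using assms by (intro real_less_lsqrt) (auto simp: power2_eq_square algebra_simps)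
  then show "\<psi> < 1" by (simp add: \<psi>_def)
  have "2 * \<psi> + \<theta> = sqrt (\<theta>\<^sup>2 + 4 * \<theta>)"
    by (simp add: \<psi>_def field_simps)
  then have "(2 * \<psi> + \<theta>)\<^sup>2 = \<theta>\<^sup>2 + 4 * \<theta>"
    using assms by simp
  then have "\<psi>\<^sup>2 = \<theta> * (1 - \<psi>)"
    by (simp add: power2_eq_square algebra_simps)
  then show "\<psi>\<^sup>2 / (1 - \<psi>) = \<theta>" "\<theta> / \<psi> = \<psi> / (1 - \<psi>)"
    using \<open>0 < \<psi>\<close> \<open>\<psi> < 1\<close> by (simp_all add: field_simps power2_eq_square)
qed

lemma ennreal_interval_cases:
  fixes y :: ennreal and L U :: real
  assumes "y \<in> {ennreal L .. ennreal U}" "0 \<le> U"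
  shows "\<exists>x. y = ennreal x \<and> x \<in> {L .. U}"
proof (cases y rule: ennreal_cases)
  case (real x)
  then show ?thesis using assms by auto
qed (use assms in \<open>auto simp: top_unique\<close>)

theorem mainTheorem15:
  fixes p1 p2 c :: real and t :: "nat \<Rightarrow> real"
  assumes "0 < p1" "p1 < 1" "0 < p2" "p2 < 1" "0 < c"
    and "optimal_seq p1 p2 c t"
  defines "q1 \<equiv> 1 - p1"
  defines "\<theta> \<equiv> - c * ln q1 / p2"
  defines "\<psi> \<equiv> (sqrt (\<theta>\<^sup>2 + 4 * \<theta>) - \<theta>) / 2"
  shows "\<exists>x. exp_time p1 p2 c t = ennreal x \<and>
           x \<in> {(ln (1 / (1 - \<psi>)) + \<theta> / \<psi> + 1) / ln (1 / q1) - p2 / ln (1 / q1)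
                 .. (ln (1 / (1 - \<psi>)) + \<theta> / \<psi> + 1) / ln (1 / q1)}"
proof -
  define lam where "lam = ln (1 / q1)"
  have "0 < lam" using assms by (simp add: lam_def q1_def)
  have "\<theta> = c * lam / p2"
    using assms by (simp add: \<theta>_def lam_def q1_def ln_div)
  then have "0 < \<theta>" using assms \<open>0 < lam\<close> by simp
  note \<psi> = quadratic_root_in_unit_interval[OF \<open>0 < \<theta>\<close>, folded \<psi>_def]
  have lam_c: "ln (1 / (1 - p1)) * c = p2 * (\<psi>\<^sup>2 / (1 - \<psi>))"
    using \<psi>(3) \<open>\<theta> = c * lam / p2\<close> assms by (simp add: lam_def q1_def field_simps)
  have bounds: "0 < p1" "p1 < 1" "0 < p2" "p2 < 1" "0 < \<psi>" "\<psi> < 1"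
    using assms \<psi> by auto
  have "exp_time p1 p2 c t \<le> exp_time p1 p2 c (witness_seq p1 p2 \<psi>)"
    using assms(6) semi_fractional_witness_seq[of p1 p2 \<psi>] bounds by (simp add: optimal_seq_def)
  also have "\<dots> \<le> ennreal (opt_const \<psi> / lam)"
    using exp_time_witness_seq_le[OF bounds \<open>0 < c\<close> lam_c] by (simp add: lam_def q1_def)
  finally have "exp_time p1 p2 c t \<in> {ennreal ((opt_const \<psi> - p2) / lam) .. ennreal (opt_const \<psi> / lam)}"
    using exp_time_ge[OF bounds _ \<open>0 < c\<close> lam_c] assms(6)
    by (simp add: optimal_seq_def lam_def q1_def)
  moreover have "ln (1 / (1 - \<psi>)) + \<theta> / \<psi> + 1 = opt_const \<psi>"
    using \<psi>(4) bounds by (simp add: opt_const_def ln_div)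
  moreover have "0 \<le> opt_const \<psi> / lam"
    using opt_const_pos[OF bounds(5,6)] \<open>0 < lam\<close> by simp
  ultimately show ?thesis
    unfolding lam_def[symmetric] diff_divide_distrib[symmetric] by (intro ennreal_interval_cases) auto
qed

end
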